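(* Let $\boldsymbol{Y}_t$ be an $n\times 1$ vector of observed variables generated by the structural vector moving average model $$\boldsymbol{Y}_t=\boldsymbol{\Theta}(L)\boldsymbol{\varepsilon}_t=\sum_{j=0}^{\infty}\boldsymbol{\Theta}_j\boldsymbol{\varepsilon}_{t-j},$$ where $\boldsymbol{\varepsilon}_t=(\varepsilon_{1,t},\dots,\varepsilon_{m,t})'$ is an $m\times1$ vector of unobserved structural shocks with $E[\boldsymbol{\varepsilon}_t]=0$, $E[\boldsymbol{\varepsilon}_t\boldsymbol{\varepsilon}_t']>0$ and mutually uncorrelated components, and each $\boldsymbol{\Theta}_h$ is an $n\times m$ matrix. Let $x_t$ be the first element and $y_t$ the last element of $\boldsymbol{Y}_t$, let $\theta_{h,xs}$ denote the $(1,s)$-th element and $\theta_{h,ys}$ the $(n,s)$-th element of $\boldsymbol{\Theta}_h$. Fix $1\le S\le m$, let $\xi_t=\sum_{s=1}^{S}\varepsilon_{s,t}$, and assume the unit effect normalization $\theta_{0,xs}=1$ for all $s=1,\dots,S$. Let $z_t$ be a random variable satisfying: (i) $E[z_t\xi_t]\neq 0$; (ii) $E[z_t\varepsilon_{s,t}]=0$ for all $s=S+1,\dots,m$; (iii) $E[z_t\boldsymbol{\varepsilon}_{t+j}]=0$ for all $j\neq 0$. Write $\alpha_s=E[z_t\varepsilon_{s,t}]$ for $s=1,\dots,S$. Then for every $h=0,1,2,\dots$, $$\beta_h\equiv\frac{Cov(y_{t+h},z_t)}{Cov(x_t,z_t)}=\sum_{s=1}^{S}w_s\theta_{h,ys},\qquad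 w_s=\frac{\alpha_s}{\sum_{s'=1}^{S}\alpha_{s'}}.$$ Furthermore, if in addition either $\alpha_s\ge 0$ for all $s=1,\dots,S$ or $\alpha_s\le 0$ for all $s=1,\dots,S$, then $w_s\ge 0$ for all $s=1,\dots,S$.
   Context: All moments involved are assumed finite and the moving average series is assumed to converge so that covariances can be computed term by term. $L$ is the lag operator and $\boldsymbol{\Theta}(L)=\boldsymbol{\Theta}_0+\boldsymbol{\Theta}_1L+\boldsymbol{\Theta}_2L^2+\cdots$. *)

theory Defs
  imports "HOL-Probability.Probability"
begin

definition cov :: "'a measure \<Rightarrow> ('a \<Rightarrow> real) \<Rightarrow> ('a \<Rightarrow> real) \<Rightarrow> real" where
  "cov M X Z = integral\<^sup>L M (\<lambda>\<omega>. (X \<omega> - integral\<^sup>L M X) * (Z \<omega> - integral\<^sup>L M Z))"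

end

theory Submission
  imports Defs
begin

text \<open>
  Since the shocks have mean zero, so has every \<open>Y\<close>, and a covariance with \<open>z\<close> is just the
  cross moment with \<open>z\<close>. Computing \<open>E[z y\<^sub>t\<^sub>+\<^sub>h]\<close> term by term, the lead-lag exogeneity
  condition kills every term of the moving average except the one with lag \<open>h\<close>, which leaves
  \<open>\<Sum>\<^sub>s \<theta>\<^sub>h\<^sub>,\<^sub>y\<^sub>s \<alpha>\<^sub>s\<close>; the contemporaneous exogeneity condition restricts this sum to \<open>s \<le> S\<close>.
  At \<open>h = 0\<close> the unit effect normalization turns the same computation for \<open>x\<^sub>t\<close> into
  \<open>\<Sum>\<^sub>s \<alpha>\<^sub>s\<close>, which is nonzero by relevance.
\<close>

lemma cov_eq_integral_mult_if_mean_zero: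
  assumes "integrable M X" "integrable M (\<lambda>\<omega>. Z \<omega> * X \<omega>)" "integral\<^sup>L M X = 0"
  shows "cov M X Z = integral\<^sup>L M (\<lambda>\<omega>. Z \<omega> * X \<omega>)"
proof -
  have "cov M X Z = integral\<^sup>L M (\<lambda>\<omega>. Z \<omega> * X \<omega> - integral\<^sup>L M Z * X \<omega>)"
    unfolding cov_def using assms(3) by (simp add: algebra_simps)
  also have "\<dots> = integral\<^sup>L M (\<lambda>\<omega>. Z \<omega> * X \<omega>)"
    using assms by simp
  finally show ?thesis .
qed

lemma integral_mult_sum_distrib:
  fixes Z :: "'a \<Rightarrow> real"
  assumes "\<And>s. s \<in> I \<Longrightarrow> integrable M (\<lambda>\<omega>. Z \<omega> * X s \<omega>)"
  shows "integral\<^sup>L M (\<lambda>\<omega>. Z \<omega> * (\<Sum>s\<in>I. c s * X s \<omega>))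
           = (\<Sum>s\<in>I. c s * integral\<^sup>L M (\<lambda>\<omega>. Z \<omega> * X s \<omega>))"
proof -
  have "(\<lambda>\<omega>. Z \<omega> * (\<Sum>s\<in>I. c s * X s \<omega>)) = (\<lambda>\<omega>. \<Sum>s\<in>I. c s * (Z \<omega> * X s \<omega>))"
    by (simp add: sum_distrib_left mult.left_commute)
  then show ?thesis
    using assms by simp
qed

lemma sums_single_nonzero_term:
  fixes f :: "nat \<Rightarrow> 'a::{t2_space, topological_comm_monoid_add}"
  assumes "f sums l" "\<And>j. j \<noteq> h \<Longrightarrow> f j = 0"
  shows "l = f h"
proof -
  have "(\<lambda>j. if j = h then f j else 0) = f"
    using assms(2) by (intro ext) simp
  from sums_unique2[OF assms(1) sums_single[of h f, unfolded this]] show ?thesis .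
qed

lemma divide_sum_nonneg_if_same_sign:
  fixes a :: "'i \<Rightarrow> real"
  assumes "(\<forall>s\<in>I. a s \<ge> 0) \<or> (\<forall>s\<in>I. a s \<le> 0)" "s \<in> I"
  shows "a s / (\<Sum>s'\<in>I. a s') \<ge> 0"
  using assms(1)
proof
  assume "\<forall>s\<in>I. a s \<ge> 0"
  with assms(2) show ?thesis
    by (simp add: sum_nonneg)
next
  assume "\<forall>s\<in>I. a s \<le> 0"
  with assms(2) show ?thesis
    by (simp add: sum_nonpos divide_nonpos_nonpos)
qed

lemma integral_moving_average_mean_zero:
  fixes X :: "'a \<Rightarrow> real"
  assumes "(\<lambda>j. integral\<^sup>L M (\<lambda>\<omega>. \<Sum>s\<in>I. \<Theta> j s * \<epsilon> j s \<omega>)) sums integral\<^sup>L M X"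
    and "\<And>j s. integrable M (\<epsilon> j s)"
    and "\<And>j s. s \<in> I \<Longrightarrow> integral\<^sup>L M (\<epsilon> j s) = 0"
  shows "integral\<^sup>L M X = 0"
proof -
  have "(\<lambda>j. 0::real) sums integral\<^sup>L M X"
    using assms by simp
  from sums_unique2[OF this sums_zero] show ?thesis .
qed

lemma integral_instrument_mult_moving_average:
  fixes z :: "'a \<Rightarrow> real" and \<epsilon> :: "int \<Rightarrow> 's \<Rightarrow> 'a \<Rightarrow> real"
  assumes z_eps_int: "\<And>t' s. integrable M (\<lambda>\<omega>. z \<omega> * \<epsilon> t' s \<omega>)"
    and termwise: "(\<lambda>j. integral\<^sup>L M (\<lambda>\<omega>. z \<omega> * (\<Sum>s\<in>I. \<Theta> j s * \<epsilon> (t + int h - int j) s \<omega>)))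
                     sums integral\<^sup>L M (\<lambda>\<omega>. z \<omega> * X \<omega>)"
    and lead_lag: "\<And>j s. j \<noteq> 0 \<Longrightarrow> s \<in> I \<Longrightarrow> integral\<^sup>L M (\<lambda>\<omega>. z \<omega> * \<epsilon> (t + j) s \<omega>) = 0"
  shows "integral\<^sup>L M (\<lambda>\<omega>. z \<omega> * X \<omega>)
           = (\<Sum>s\<in>I. \<Theta> h s * integral\<^sup>L M (\<lambda>\<omega>. z \<omega> * \<epsilon> t s \<omega>))"
proof -
  have "integral\<^sup>L M (\<lambda>\<omega>. z \<omega> * (\<Sum>s\<in>I. \<Theta> j s * \<epsilon> (t + int h - int j) s \<omega>)) = 0"
    if "j \<noteq> h" for j
  proof -
    have lag: "int h - int j \<noteq> 0"
      using that by simp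
    have "integral\<^sup>L M (\<lambda>\<omega>. z \<omega> * \<epsilon> (t + int h - int j) s \<omega>) = 0" if "s \<in> I" for s
      using lead_lag[OF lag that] by (simp add: add_diff_eq)
    then show ?thesis
      by (simp add: integral_mult_sum_distrib[OF z_eps_int])
  qed
  from sums_single_nonzero_term[OF termwise this] show ?thesis
    by (simp add: integral_mult_sum_distrib[OF z_eps_int])
qed

theorem proposition1:
  fixes M :: "'a measure"
    and n m S :: nat
    and t :: int
    and \<epsilon> :: "int \<Rightarrow> nat \<Rightarrow> 'a \<Rightarrow> real"
    and \<Theta> :: "nat \<Rightarrow> nat \<Rightarrow> nat \<Rightarrow> real"
    and Y :: "int \<Rightarrow> nat \<Rightarrow> 'a \<Rightarrow> real"
    and z :: "'a \<Rightarrow> real"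
  assumes P: "prob_space M"
    and n_pos: "1 \<le> n"
    and S_range: "1 \<le> S" "S \<le> m"
    (* shocks: measurable, finite second moments, mean zero *)
    and eps_meas: "\<And>t' s. \<epsilon> t' s \<in> borel_measurable M"
    and eps_int: "\<And>t' s. integrable M (\<epsilon> t' s)"
    and eps_sq: "\<And>t' s t'' s'. integrable M (\<lambda>\<omega>. \<epsilon> t' s \<omega> * \<epsilon> t'' s' \<omega>)"
    and eps_mean: "\<And>t' s. s \<in> {1..m} \<Longrightarrow> integral\<^sup>L M (\<epsilon> t' s) = 0"
    (* E[eps_t eps_t'] positive definite *)
    and eps_pd: "\<And>t' c. (\<exists>s\<in>{1..m}. c s \<noteq> 0) \<Longrightarrow>
        integral\<^sup>L M (\<lambda>\<omega>. (\<Sum>s=1..m. c s * \<epsilon> t' s \<omega>)\<^sup>2) > 0"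
    (* mutually uncorrelated components *)
    and eps_uncorr: "\<And>t' s s'. s \<in> {1..m} \<Longrightarrow> s' \<in> {1..m} \<Longrightarrow> s \<noteq> s' \<Longrightarrow>
        integral\<^sup>L M (\<lambda>\<omega>. \<epsilon> t' s \<omega> * \<epsilon> t' s' \<omega>) = 0"
    (* the structural VMA model, with pointwise convergent series *)
    and Y_summable: "\<And>t' i \<omega>. i \<in> {1..n} \<Longrightarrow>
        summable (\<lambda>j. \<Sum>s=1..m. \<Theta> j i s * \<epsilon> (t' - int j) s \<omega>)"
    and Y_def: "\<And>t' i \<omega>. i \<in> {1..n} \<Longrightarrow>
        Y t' i \<omega> = (\<Sum>j. \<Sum>s=1..m. \<Theta> j i s * \<epsilon> (t' - int j) s \<omega>)"
    (* the instrument: measurable, finite moments *)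
    and z_meas: "z \<in> borel_measurable M"
    and z_int: "integrable M z"
    and z_sq: "integrable M (\<lambda>\<omega>. (z \<omega>)\<^sup>2)"
    and z_eps_int: "\<And>t' s. integrable M (\<lambda>\<omega>. z \<omega> * \<epsilon> t' s \<omega>)"
    and Y_int: "\<And>t' i. i \<in> {1..n} \<Longrightarrow> integrable M (Y t' i)"
    and Y_sq: "\<And>t' i. i \<in> {1..n} \<Longrightarrow> integrable M (\<lambda>\<omega>. (Y t' i \<omega>)\<^sup>2)"
    and zY_int: "\<And>t' i. i \<in> {1..n} \<Longrightarrow> integrable M (\<lambda>\<omega>. z \<omega> * Y t' i \<omega>)"
    (* moments of the moving average can be computed term by term *)
    and Y_mean_termwise: "\<And>t' i. i \<in> {1..n} \<Longrightarrow>
        (\<lambda>j. integral\<^sup>L M (\<lambda>\<omega>. \<Sum>s=1..m. \<Theta> j i s * \<epsilon> (t' - int j) s \<omega>))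
          sums integral\<^sup>L M (Y t' i)"
    and zY_termwise: "\<And>t' i. i \<in> {1..n} \<Longrightarrow>
        (\<lambda>j. integral\<^sup>L M (\<lambda>\<omega>. z \<omega> * (\<Sum>s=1..m. \<Theta> j i s * \<epsilon> (t' - int j) s \<omega>)))
          sums integral\<^sup>L M (\<lambda>\<omega>. z \<omega> * Y t' i \<omega>)"
    (* unit effect normalization *)
    and unit_effect: "\<And>s. s \<in> {1..S} \<Longrightarrow> \<Theta> 0 1 s = 1"
    (* instrument conditions (i)-(iii) *)
    and relevance: "integral\<^sup>L M (\<lambda>\<omega>. z \<omega> * (\<Sum>s=1..S. \<epsilon> t s \<omega>)) \<noteq> 0"
    and exog: "\<And>s. s \<in> {S+1..m} \<Longrightarrow> integral\<^sup>L M (\<lambda>\<omega>. z \<omega> * \<epsilon> t s \<omega>) = 0"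
    and lead_lag: "\<And>j s. j \<noteq> 0 \<Longrightarrow> s \<in> {1..m} \<Longrightarrow>
        integral\<^sup>L M (\<lambda>\<omega>. z \<omega> * \<epsilon> (t + j) s \<omega>) = 0"
  shows "(\<forall>h::nat.
            cov M (Y (t + int h) n) z / cov M (Y t 1) z
              = (\<Sum>s=1..S. (integral\<^sup>L M (\<lambda>\<omega>. z \<omega> * \<epsilon> t s \<omega>)
                  / (\<Sum>s'=1..S. integral\<^sup>L M (\<lambda>\<omega>. z \<omega> * \<epsilon> t s' \<omega>))) * \<Theta> h n s))
       \<and> (((\<forall>s\<in>{1..S}. integral\<^sup>L M (\<lambda>\<omega>. z \<omega> * \<epsilon> t s \<omega>) \<ge> 0)
            \<or> (\<forall>s\<in>{1..S}. integral\<^sup>L M (\<lambda>\<omega>. z \<omega> * \<epsilon> t s \<omega>) \<le> 0))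
          \<longrightarrow> (\<forall>s\<in>{1..S}. integral\<^sup>L M (\<lambda>\<omega>. z \<omega> * \<epsilon> t s \<omega>)
                  / (\<Sum>s'=1..S. integral\<^sup>L M (\<lambda>\<omega>. z \<omega> * \<epsilon> t s' \<omega>)) \<ge> 0))"
proof -
  define \<alpha> where "\<alpha> s = integral\<^sup>L M (\<lambda>\<omega>. z \<omega> * \<epsilon> t s \<omega>)" for s
  define A where "A = (\<Sum>s=1..S. \<alpha> s)"
  have cov_Y: "cov M (Y (t + int h) i) z = (\<Sum>s=1..S. \<Theta> h i s * \<alpha> s)" if i: "i \<in> {1..n}" for h i
  proof -
    have "integral\<^sup>L M (Y (t + int h) i) = 0"
      using Y_mean_termwise[OF i] eps_int eps_mean by (rule integral_moving_average_mean_zero)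
    then have "cov M (Y (t + int h) i) z = integral\<^sup>L M (\<lambda>\<omega>. z \<omega> * Y (t + int h) i \<omega>)"
      using Y_int[OF i] zY_int[OF i] by (simp add: cov_eq_integral_mult_if_mean_zero)
    also have "\<dots> = (\<Sum>s=1..m. \<Theta> h i s * \<alpha> s)"
      unfolding \<alpha>_def using z_eps_int zY_termwise[OF i] lead_lag
      by (rule integral_instrument_mult_moving_average)
    also have "\<dots> = (\<Sum>s=1..S. \<Theta> h i s * \<alpha> s)"
      using S_range exog by (intro sum.mono_neutral_right) (auto simp: \<alpha>_def)
    finally show ?thesis .
  qed
  have "1 \<in> {1..n}" "n \<in> {1..n}"
    using n_pos by auto
  have "cov M (Y t 1) z = A"
    using cov_Y[OF \<open>1 \<in> {1..n}\<close>, of 0] unit_effect by (simp add: A_def)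
  then have weights: "cov M (Y (t + int h) n) z / cov M (Y t 1) z = (\<Sum>s=1..S. (\<alpha> s / A) * \<Theta> h n s)"
    for h
    using cov_Y[OF \<open>n \<in> {1..n}\<close>] by (simp add: sum_divide_distrib mult.commute)
  have nonneg: "(\<forall>s\<in>{1..S}. \<alpha> s \<ge> 0) \<or> (\<forall>s\<in>{1..S}. \<alpha> s \<le> 0) \<Longrightarrow> \<forall>s\<in>{1..S}. \<alpha> s / A \<ge> 0"
    unfolding A_def using divide_sum_nonneg_if_same_sign[of "{1..S}" \<alpha>] by blast
  show ?thesis
    unfolding \<alpha>_def[symmetric] A_def[symmetric] by (intro conjI allI impI weights nonneg)
qed

end
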